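(* Let $W_2\in\{M_2,S_2\}$ and let $\phi:W_2\to W_2$ be a linear map such that $\sigma_{\mathcal{K}}(\phi(A))=\sigma_{\mathcal{K}}(A)$ for all $A\in W_2$. Then for all $A\in W_2$, $$\sigma_{\mathcal{K}}^{int}(A)=\sigma_{\mathcal{K}}^{int}(\phi(A))\quad\text{and}\quad \sigma_{\mathcal{K}}^{bd}(A)=\sigma_{\mathcal{K}}^{bd}(\phi(A)).$$
   Context: $M_2$ is the space of real $2\times2$ matrices, $S_2$ the subspace of symmetric ones. The Lorentz cone in $\mathbb{R}^2$ is $\mathcal{K}=\{(x_1,x_2)^T:\ |x_1|\le x_2\}$. For $A\in M_2$, a real $\lambda$ is an L-eigenvalue of $A$ if there is a nonzero $x\in\mathcal{K}$ with $(A-\lambda I)x\in\mathcal{K}$ and $x^T(A-\lambda I)x=0$ ($x$ is an associated L-eigenvector); $\sigma_{\mathcal{K}}(A)$ is the set of L-eigenvalues. $\lambda$ is an interior L-eigenvalue if it has an associated L-eigenvector in the interior of $\mathcal{K}$, and a boundary L-eigenvalue if it has an associated L-eigenvector on the boundary of $\mathcal{K}$; $\sigma_{\mathcal{K}}^{int}(A)$ and $\sigma_{\mathcal{K}}^{bd}(A)$ denote the sets of interior and boundary L-eigenvalues. *)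

theory Defs
  imports "HOL-Analysis.Analysis"
begin

type_synonym mat2 = "real^2^2"

definition lorentz_cone :: "(real^2) set" where
  "lorentz_cone = {x. \<bar>x$1\<bar> \<le> x$2}"

definition is_L_eigvec :: "mat2 \<Rightarrow> real \<Rightarrow> real^2 \<Rightarrow> bool" where
  "is_L_eigvec A lam x \<longleftrightarrow> x \<noteq> 0 \<and> x \<in> lorentz_cone \<and>
     (A - lam *\<^sub>R mat 1) *v x \<in> lorentz_cone \<and> x \<bullet> ((A - lam *\<^sub>R mat 1) *v x) = 0"

definition L_spectrum :: "mat2 \<Rightarrow> real set" where
  "L_spectrum A = {lam. \<exists>x. is_L_eigvec A lam x}"

definition L_spectrum_int :: "mat2 \<Rightarrow> real set" where
  "L_spectrum_int A = {lam. \<exists>x. is_L_eigvec A lam x \<and> x \<in> interior lorentz_cone}"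

definition L_spectrum_bd :: "mat2 \<Rightarrow> real set" where
  "L_spectrum_bd A = {lam. \<exists>x. is_L_eigvec A lam x \<and> x \<in> frontier lorentz_cone}"

definition sym_mats :: "mat2 set" where
  "sym_mats = {A. transpose A = A}"

end

theory Submission
  imports Defs
begin

text \<open>In the coordinates z = (x2 + x1, x2 - x1) the Lorentz cone becomes the nonnegative quadrant, and
  the L-eigenvalue problem of A becomes the Pareto eigenvalue problem of a matrix [[a, b], [c, d]]:
  its boundary eigenvalues are a (if c \<ge> 0) and d (if b \<ge> 0), its interior eigenvalues are the
  \<lambda> with b = t (\<lambda> - a) and \<lambda> - d = t c for some t > 0. Testing a spectrum preserver on
  suitable matrices shows that in these coordinates it is a similarity by diag(k, 1) or by
  [[0, 1], [k, 0]] for some k > 0 (with k = 1 on symmetric matrices). Such a similarity is induced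
  by a linear automorphism of the quadrant, so it maps interior eigenvectors to interior ones and
  boundary eigenvectors to boundary ones.\<close>

lemma lorentz_cone_halfspaces:
  "lorentz_cone = {x. vector [1, -1] \<bullet> x \<le> 0} \<inter> {x. vector [-1, -1] \<bullet> x \<le> (0::real)}"
  by (auto simp: lorentz_cone_def inner_vec_def sum_2 abs_le_iff)

lemma interior_lorentz_cone: "interior lorentz_cone = {x. \<bar>x$1\<bar> < x$2}"
proof -
  have u: "vector [1, -1] \<noteq> (0::real^2)" and v: "vector [-1, -1] \<noteq> (0::real^2)"
    by (metis vector_2(1) zero_index zero_neq_neg_one zero_neq_one)+
  have "interior lorentz_cone = {x. vector [1, -1] \<bullet> x < 0} \<inter> {x. vector [-1, -1] \<bullet> x < (0::real)}"
    unfolding lorentz_cone_halfspaces interior_Int interior_halfspace_le[OF u] interior_halfspace_le[OF v] ..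
  then show ?thesis
    by (auto simp: inner_vec_def sum_2 abs_less_iff)
qed

lemma frontier_lorentz_cone: "frontier lorentz_cone = {x. \<bar>x$1\<bar> = x$2}"
proof -
  have "closed lorentz_cone"
    unfolding lorentz_cone_halfspaces by (intro closed_Int closed_halfspace_le)
  then show ?thesis
    unfolding frontier_def interior_lorentz_cone by (auto simp: lorentz_cone_def)
qed

text \<open>(cone_a A, cone_b A; cone_c A, cone_d A) is Q A Q^-1 for Q x = (x2 + x1, x2 - x1);
  cone_mat is the inverse coordinate map.\<close>

definition cone_a :: "mat2 \<Rightarrow> real" where "cone_a A = (A$1$1 + A$1$2 + A$2$1 + A$2$2) / 2"
definition cone_b :: "mat2 \<Rightarrow> real" where "cone_b A = (- A$1$1 + A$1$2 - A$2$1 + A$2$2) / 2"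
definition cone_c :: "mat2 \<Rightarrow> real" where "cone_c A = (- A$1$1 - A$1$2 + A$2$1 + A$2$2) / 2"
definition cone_d :: "mat2 \<Rightarrow> real" where "cone_d A = (A$1$1 - A$1$2 - A$2$1 + A$2$2) / 2"

definition cone_mat :: "real \<Rightarrow> real \<Rightarrow> real \<Rightarrow> real \<Rightarrow> mat2" where
  "cone_mat a b c d = vector [vector [(a - b - c + d) / 2, (a + b - c - d) / 2],
                              vector [(a - b + c - d) / 2, (a + b + c + d) / 2]]"

lemma cone_coords_cone_mat [simp]:
  "cone_a (cone_mat a b c d) = a" "cone_b (cone_mat a b c d) = b"
  "cone_c (cone_mat a b c d) = c" "cone_d (cone_mat a b c d) = d"
  unfolding cone_mat_def cone_a_def cone_b_def cone_c_def cone_d_def by (simp_all add: field_simps)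

lemma cone_mat_cone_coords: "cone_mat (cone_a A) (cone_b A) (cone_c A) (cone_d A) = A"
  unfolding cone_mat_def cone_a_def cone_b_def cone_c_def cone_d_def vec_eq_iff forall_2
  by (simp add: field_simps)

lemma mat2_eq_iff_cone_coords:
  "A = B \<longleftrightarrow> cone_a A = cone_a B \<and> cone_b A = cone_b B \<and> cone_c A = cone_c B \<and> cone_d A = cone_d B"
  by (metis cone_mat_cone_coords)

lemma cone_coords_add [simp]:
  "cone_a (A + B) = cone_a A + cone_a B" "cone_b (A + B) = cone_b A + cone_b B"
  "cone_c (A + B) = cone_c A + cone_c B" "cone_d (A + B) = cone_d A + cone_d B"
  unfolding cone_a_def cone_b_def cone_c_def cone_d_def by (simp_all add: field_simps)

lemma cone_coords_scaleR [simp]: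
  "cone_a (r *\<^sub>R A) = r * cone_a A" "cone_b (r *\<^sub>R A) = r * cone_b A"
  "cone_c (r *\<^sub>R A) = r * cone_c A" "cone_d (r *\<^sub>R A) = r * cone_d A"
  unfolding cone_a_def cone_b_def cone_c_def cone_d_def by (simp_all add: field_simps)

lemma sym_mats_iff_cone_coords: "A \<in> sym_mats \<longleftrightarrow> cone_b A = cone_c A"
proof -
  have "A \<in> sym_mats \<longleftrightarrow> A$1$2 = A$2$1"
    unfolding sym_mats_def mem_Collect_eq vec_eq_iff forall_2 transpose_def by auto
  also have "\<dots> \<longleftrightarrow> cone_b A = cone_c A"
    unfolding cone_b_def cone_c_def by (simp add: field_simps)
  finally show ?thesis .
qed

definition pareto_eigvec :: "real \<Rightarrow> real \<Rightarrow> real \<Rightarrow> real \<Rightarrow> real \<Rightarrow> real \<Rightarrow> real \<Rightarrow> bool" where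
  "pareto_eigvec a b c d l z1 z2 \<longleftrightarrow> z1 \<ge> 0 \<and> z2 \<ge> 0 \<and> (z1 \<noteq> 0 \<or> z2 \<noteq> 0) \<and>
     (a - l) * z1 + b * z2 \<ge> 0 \<and> c * z1 + (d - l) * z2 \<ge> 0 \<and>
     z1 * ((a - l) * z1 + b * z2) + z2 * (c * z1 + (d - l) * z2) = 0"

definition pareto_bd :: "real \<Rightarrow> real \<Rightarrow> real \<Rightarrow> real \<Rightarrow> real \<Rightarrow> bool" where
  "pareto_bd a b c d l \<longleftrightarrow> (l = a \<and> c \<ge> 0) \<or> (l = d \<and> b \<ge> 0)"

definition pareto_int :: "real \<Rightarrow> real \<Rightarrow> real \<Rightarrow> real \<Rightarrow> real \<Rightarrow> bool" where
  "pareto_int a b c d l \<longleftrightarrow> (\<exists>t>0. b = t * (l - a) \<and> l - d = t * c)"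

definition pareto_spec :: "real \<Rightarrow> real \<Rightarrow> real \<Rightarrow> real \<Rightarrow> real \<Rightarrow> bool" where
  "pareto_spec a b c d l \<longleftrightarrow> pareto_bd a b c d l \<or> pareto_int a b c d l"

lemma is_L_eigvec_iff_pareto_eigvec:
  "is_L_eigvec A l x \<longleftrightarrow>
     pareto_eigvec (cone_a A) (cone_b A) (cone_c A) (cone_d A) l (x$2 + x$1) (x$2 - x$1)"
proof -
  define y where "y = (A - l *\<^sub>R mat 1) *v x"
  have "y$1 = (A$1$1 - l) * x$1 + A$1$2 * x$2" "y$2 = A$2$1 * x$1 + (A$2$2 - l) * x$2"
    by (simp_all add: y_def matrix_vector_mult_def sum_2 mat_def algebra_simps)
  then have "(cone_a A - l) * (x$2 + x$1) + cone_b A * (x$2 - x$1) = y$2 + y$1"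
    "cone_c A * (x$2 + x$1) + (cone_d A - l) * (x$2 - x$1) = y$2 - y$1"
    by (simp_all add: cone_a_def cone_b_def cone_c_def cone_d_def field_simps)
  moreover have "2 * (x \<bullet> y) = (x$2 + x$1) * (y$2 + y$1) + (x$2 - x$1) * (y$2 - y$1)"
    by (simp add: inner_vec_def sum_2 algebra_simps)
  moreover have "x = 0 \<longleftrightarrow> x$1 = 0 \<and> x$2 = 0"
    by (simp add: vec_eq_iff forall_2)
  ultimately show ?thesis
    unfolding is_L_eigvec_def pareto_eigvec_def y_def[symmetric] lorentz_cone_def mem_Collect_eq abs_le_iff
    by (simp only:) linarith
qed

lemma ex_cone_coordinates: "(\<exists>x::real^2. P (x$2 + x$1) (x$2 - x$1)) \<longleftrightarrow> (\<exists>z1 z2. P z1 z2)"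
proof
  assume "\<exists>z1 z2. P z1 z2"
  then obtain z1 z2 where "P z1 z2" by blast
  moreover define x where "x = (vector [(z1 - z2) / 2, (z1 + z2) / 2] :: real^2)"
  moreover have "x$2 + x$1 = z1" "x$2 - x$1 = z2"
    by (simp_all add: x_def field_simps)
  ultimately show "\<exists>x::real^2. P (x$2 + x$1) (x$2 - x$1)" by metis
qed blast

lemma pareto_int_iff_eigvec:
  "pareto_int a b c d l \<longleftrightarrow> (\<exists>z1 z2. z1 > 0 \<and> z2 > 0 \<and> pareto_eigvec a b c d l z1 z2)"
proof
  assume "pareto_int a b c d l"
  then obtain t where "t > 0" "b = t * (l - a)" "l - d = t * c"
    unfolding pareto_int_def by blast
  then have "pareto_eigvec a b c d l t 1"
    unfolding pareto_eigvec_def by (simp add: algebra_simps)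
  with \<open>t > 0\<close> show "\<exists>z1 z2. z1 > 0 \<and> z2 > 0 \<and> pareto_eigvec a b c d l z1 z2"
    by (intro exI[of _ t] exI[of _ 1]) simp
next
  assume "\<exists>z1 z2. z1 > 0 \<and> z2 > 0 \<and> pareto_eigvec a b c d l z1 z2"
  then obtain z1 z2 where z: "z1 > 0" "z2 > 0" and eig: "pareto_eigvec a b c d l z1 z2" by blast
  let ?w1 = "(a - l) * z1 + b * z2" and ?w2 = "c * z1 + (d - l) * z2"
  have "z1 * ?w1 \<ge> 0" "z2 * ?w2 \<ge> 0" "z1 * ?w1 + z2 * ?w2 = 0"
    using eig z unfolding pareto_eigvec_def by auto
  then have "?w1 = 0" "?w2 = 0"
    using z by (auto simp: add_nonneg_eq_0_iff)
  then show "pareto_int a b c d l"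
    unfolding pareto_int_def using z
    by (intro exI[of _ "z1 / z2"]) (simp add: field_simps)
qed

lemma pareto_bd_iff_eigvec:
  "pareto_bd a b c d l \<longleftrightarrow> (\<exists>z1 z2. (z1 = 0 \<or> z2 = 0) \<and> pareto_eigvec a b c d l z1 z2)"
proof
  assume "pareto_bd a b c d l"
  then have "pareto_eigvec a b c d l 1 0 \<or> pareto_eigvec a b c d l 0 1"
    unfolding pareto_bd_def pareto_eigvec_def by auto
  then show "\<exists>z1 z2. (z1 = 0 \<or> z2 = 0) \<and> pareto_eigvec a b c d l z1 z2" by blast
next
  assume "\<exists>z1 z2. (z1 = 0 \<or> z2 = 0) \<and> pareto_eigvec a b c d l z1 z2"
  then obtain z1 z2 where z: "z1 = 0 \<or> z2 = 0" and eig: "pareto_eigvec a b c d l z1 z2" by blast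
  show "pareto_bd a b c d l"
  proof (cases "z1 = 0")
    case True
    with eig have "z2 > 0" "z2 * ((d - l) * z2) = 0" "b * z2 \<ge> 0"
      unfolding pareto_eigvec_def by auto
    then have "l = d" "b \<ge> 0"
      by (simp_all add: zero_le_mult_iff)
    then show ?thesis unfolding pareto_bd_def by simp
  next
    case False
    with z eig have "z1 > 0" "z1 * ((a - l) * z1) = 0" "c * z1 \<ge> 0"
      unfolding pareto_eigvec_def by auto
    then have "l = a" "c \<ge> 0"
      by (simp_all add: zero_le_mult_iff)
    then show ?thesis unfolding pareto_bd_def by simp
  qed
qed

lemma L_spectrum_int_iff:
  "l \<in> L_spectrum_int A \<longleftrightarrow> pareto_int (cone_a A) (cone_b A) (cone_c A) (cone_d A) l"
proof -
  have "l \<in> L_spectrum_int A \<longleftrightarrow> (\<exists>x::real^2. x$2 + x$1 > 0 \<and> x$2 - x$1 > 0 \<and>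
      pareto_eigvec (cone_a A) (cone_b A) (cone_c A) (cone_d A) l (x$2 + x$1) (x$2 - x$1))"
    unfolding L_spectrum_int_def interior_lorentz_cone is_L_eigvec_iff_pareto_eigvec mem_Collect_eq
    by (intro ex_cong1) linarith
  also have "\<dots> \<longleftrightarrow> (\<exists>z1 z2. z1 > 0 \<and> z2 > 0 \<and>
      pareto_eigvec (cone_a A) (cone_b A) (cone_c A) (cone_d A) l z1 z2)"
    by (rule ex_cone_coordinates)
  also have "\<dots> \<longleftrightarrow> pareto_int (cone_a A) (cone_b A) (cone_c A) (cone_d A) l"
    by (rule pareto_int_iff_eigvec[symmetric])
  finally show ?thesis .
qed

lemma L_spectrum_bd_iff:
  "l \<in> L_spectrum_bd A \<longleftrightarrow> pareto_bd (cone_a A) (cone_b A) (cone_c A) (cone_d A) l"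
proof -
  have "l \<in> L_spectrum_bd A \<longleftrightarrow> (\<exists>x::real^2. (x$2 + x$1 = 0 \<or> x$2 - x$1 = 0) \<and>
      pareto_eigvec (cone_a A) (cone_b A) (cone_c A) (cone_d A) l (x$2 + x$1) (x$2 - x$1))"
    unfolding L_spectrum_bd_def frontier_lorentz_cone is_L_eigvec_iff_pareto_eigvec mem_Collect_eq
      pareto_eigvec_def
    by (intro ex_cong1) linarith
  also have "\<dots> \<longleftrightarrow> (\<exists>z1 z2. (z1 = 0 \<or> z2 = 0) \<and>
      pareto_eigvec (cone_a A) (cone_b A) (cone_c A) (cone_d A) l z1 z2)"
    by (rule ex_cone_coordinates)
  also have "\<dots> \<longleftrightarrow> pareto_bd (cone_a A) (cone_b A) (cone_c A) (cone_d A) l"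
    by (rule pareto_bd_iff_eigvec[symmetric])
  finally show ?thesis .
qed

lemma L_spectrum_eq_int_Un_bd: "L_spectrum A = L_spectrum_int A \<union> L_spectrum_bd A"
proof -
  have "x \<in> interior lorentz_cone \<or> x \<in> frontier lorentz_cone" if "x \<in> lorentz_cone" for x
    using that closure_subset unfolding frontier_def by blast
  then show ?thesis
    unfolding L_spectrum_def L_spectrum_int_def L_spectrum_bd_def is_L_eigvec_def by blast
qed

lemma L_spectrum_iff:
  "l \<in> L_spectrum A \<longleftrightarrow> pareto_spec (cone_a A) (cone_b A) (cone_c A) (cone_d A) l"
  unfolding L_spectrum_eq_int_Un_bd Un_iff pareto_spec_def L_spectrum_int_iff L_spectrum_bd_iff by blast

lemma pareto_int_flip: "pareto_int d c b a l \<longleftrightarrow> pareto_int a b c d l"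
proof -
  have "pareto_int a b c d l" if "pareto_int d c b a l" for a b c d :: real
  proof -
    from that obtain t where "t > 0" "c = t * (l - d)" "l - a = t * b"
      unfolding pareto_int_def by blast
    then show ?thesis
      unfolding pareto_int_def by (intro exI[of _ "1 / t"]) (simp add: field_simps)
  qed
  then show ?thesis by blast
qed

lemma pareto_bd_flip: "pareto_bd d c b a l \<longleftrightarrow> pareto_bd a b c d l"
  unfolding pareto_bd_def by auto

lemma pareto_spec_flip: "pareto_spec d c b a l \<longleftrightarrow> pareto_spec a b c d l"
  using pareto_int_flip pareto_bd_flip unfolding pareto_spec_def by blast

lemma pareto_int_rescale:
  assumes "k > 0"
  shows "pareto_int a (k * b) (c / k) d l \<longleftrightarrow> pareto_int a b c d l"
proof
  assume "pareto_int a (k * b) (c / k) d l"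
  then obtain t where "t > 0" "k * b = t * (l - a)" "l - d = t * (c / k)"
    unfolding pareto_int_def by blast
  with assms show "pareto_int a b c d l"
    unfolding pareto_int_def by (intro exI[of _ "t / k"]) (simp add: field_simps)
next
  assume "pareto_int a b c d l"
  then obtain t where t: "t > 0" "b = t * (l - a)" "l - d = t * c"
    unfolding pareto_int_def by blast
  have "k * b = (t * k) * (l - a)" "l - d = (t * k) * (c / k)"
    using t assms by simp_all
  with t(1) assms show "pareto_int a (k * b) (c / k) d l"
    unfolding pareto_int_def by (intro exI[of _ "t * k"]) simp
qed

lemma pareto_bd_rescale:
  assumes "k > 0"
  shows "pareto_bd a (k * b) (c / k) d l \<longleftrightarrow> pareto_bd a b c d l"
  using assms unfolding pareto_bd_def by (simp add: zero_le_mult_iff zero_le_divide_iff)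

lemma pareto_spec_diagonal: "pareto_spec a 0 0 d l \<longleftrightarrow> l = a \<or> l = d"
  unfolding pareto_spec_def pareto_bd_def pareto_int_def by auto

lemma pareto_spec_at_a_iff: "b < 0 \<Longrightarrow> pareto_spec a b c d a \<longleftrightarrow> c \<ge> 0"
  unfolding pareto_spec_def pareto_bd_def pareto_int_def by auto

lemma pareto_spec_at_d_iff: "c < 0 \<Longrightarrow> pareto_spec a b c d d \<longleftrightarrow> b \<ge> 0"
  using pareto_spec_at_a_iff[of c d b a] pareto_spec_flip by blast

lemma pareto_spec_skew_dominant:
  assumes "N > \<bar>a - d\<bar>" "pareto_spec a (- N) N d l"
  shows "l = a"
proof (rule ccontr)
  assume "l \<noteq> a"
  with assms have "pareto_int a (- N) N d l"
    unfolding pareto_spec_def pareto_bd_def by auto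
  then obtain t where t: "t > 0" "- N = t * (l - a)" "l - d = t * N"
    unfolding pareto_int_def by blast
  \<comment> \<open>eliminating l gives t (a - d) = (t^2 + 1) N \<ge> 2 t N\<close>
  then have "t * (a - d) = (t * t + 1) * N"
    by (simp add: algebra_simps)
  moreover have "(t * t + 1) * N \<ge> (2 * t) * N"
    using assms(1) sum_squares_bound[of t 1] by (intro mult_right_mono) (auto simp: power2_eq_square)
  ultimately have "t * (2 * N) \<le> t * (a - d)"
    by (simp add: algebra_simps)
  then have "a - d \<ge> 2 * N"
    using t(1) by simp
  with assms(1) show False by linarith
qed

lemma pareto_spec_zero_diag_triangular: "b = 0 \<or> c = 0 \<Longrightarrow> pareto_spec 0 b c 0 l \<Longrightarrow> l = 0"
  unfolding pareto_spec_def pareto_bd_def pareto_int_def by auto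

lemma pareto_spec_zero_diag_pos:
  assumes "l > 0" "pareto_spec 0 b c 0 l"
  shows "b > 0 \<and> c > 0 \<and> b * c = l * l"
proof -
  from assms obtain t where "t > 0" "b = t * l" "l = t * c"
    unfolding pareto_spec_def pareto_bd_def pareto_int_def by auto
  with assms(1) show ?thesis
    by (auto simp: zero_less_mult_iff)
qed

lemma pareto_spec_zero_diag_square: "l > 0 \<Longrightarrow> pareto_spec 0 1 (l * l) 0 l"
  unfolding pareto_spec_def pareto_int_def by (intro disjI2 exI[of _ "1 / l"]) (simp add: field_simps)

lemma diag_zero_if_pareto_spectra_zero:
  assumes "\<And>l. pareto_spec a b c d l \<Longrightarrow> l = 0"
    and "\<And>l. pareto_spec (- a) (- b) (- c) (- d) l \<Longrightarrow> l = 0"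
  shows "a = 0 \<and> d = 0"
proof -
  have "pareto_spec a b c d a \<or> pareto_spec (- a) (- b) (- c) (- d) (- a)"
    "pareto_spec a b c d d \<or> pareto_spec (- a) (- b) (- c) (- d) (- d)"
    unfolding pareto_spec_def pareto_bd_def by auto
  with assms show ?thesis by force
qed

lemma pareto_spec_sym_equal_diag: "pareto_spec a b b a l \<longleftrightarrow> (l = a \<and> b \<ge> 0) \<or> l = a + b"
proof
  assume "pareto_spec a b b a l"
  moreover have "l = a + b" if "pareto_int a b b a l"
  proof -
    from that obtain t where t: "t > 0" "b = t * (l - a)" "l - a = t * b"
      unfolding pareto_int_def by blast
    then have "b * ((t - 1) * (t + 1)) = 0"
      by (simp add: algebra_simps)
    with t show ?thesis by auto
  qed
  ultimately show "(l = a \<and> b \<ge> 0) \<or> l = a + b"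
    unfolding pareto_spec_def pareto_bd_def by auto
next
  assume "(l = a \<and> b \<ge> 0) \<or> l = a + b"
  then show "pareto_spec a b b a l"
    unfolding pareto_spec_def pareto_bd_def pareto_int_def by (auto intro: exI[of _ 1])
qed

lemma pareto_int_sym_neg_unique:
  assumes "b < 0" "pareto_int a b b d l" "pareto_int a b b d m"
  shows "l = m"
proof -
  obtain t where t: "t > 0" "b = t * (l - a)" "l - d = t * b"
    using assms(2) unfolding pareto_int_def by blast
  obtain s where s: "s > 0" "b = s * (m - a)" "m - d = s * b"
    using assms(3) unfolding pareto_int_def by blast
  \<comment> \<open>both t and s solve t (d - a) = b (1 - t^2), and the map t \<mapsto> b (1 - t^2) / t is injective for b < 0\<close>
  have "u * (d - a) = b - u * u * b" if "u * (l' - a) = b" "u * b = l' - d" for u l'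
  proof -
    have "u * (d - a) = u * (l' - a) - u * (l' - d)"
      by (simp add: algebra_simps)
    then show ?thesis
      using that by (simp add: mult.assoc)
  qed
  then have "t * (d - a) = b - t * t * b" "s * (d - a) = b - s * s * b"
    using t s by simp_all
  then have "s * (b - t * t * b) = t * (b - s * s * b)"
    by (metis mult.left_commute)
  then have "b * ((s - t) * (1 + s * t)) = 0"
    by (simp add: algebra_simps)
  moreover have "1 + s * t > 0"
    using s t by (simp add: add_pos_pos)
  ultimately have "s = t"
    using assms(1) by simp
  with t s show ?thesis by simp
qed

lemma eq_zero_if_sign_preserving:
  fixes x k :: real
  assumes "k > 0" "\<And>b. 0 \<le> b \<longleftrightarrow> 0 \<le> x + k * b"
  shows "x = 0"
  using assms(2)[of 0] assms(2)[of "- x / k"] assms(1) by (auto simp: divide_le_0_iff)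

lemma pareto_spec_affine_invariance:
  fixes k a d p q x y :: real
  assumes k: "k > 0"
    and H: "\<And>b c l. pareto_spec a b c d l \<longleftrightarrow> pareto_spec p (x + k * b) (y + c / k) q l"
  shows "p = a \<and> q = d \<and> x = 0 \<and> y = 0"
proof -
  \<comment> \<open>choose b, c with image off-diagonal (- N, N) resp. (N, - N): then the right-hand spectrum is {p} resp. {q}\<close>
  define N where "N = \<bar>p - q\<bar> + \<bar>x\<bar> + \<bar>y\<bar> + 1"
  have N: "N > \<bar>p - q\<bar>" "N > \<bar>x\<bar>" "N > \<bar>y\<bar>"
    unfolding N_def by auto
  have "pareto_spec a ((- N - x) / k) (k * (N - y)) d a"
    using N k unfolding pareto_spec_def pareto_bd_def by simp
  then have "pareto_spec p (- N) N q a"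
    using H k by simp
  then have pa: "p = a"
    using pareto_spec_skew_dominant N(1) by blast
  have "pareto_spec a ((N - x) / k) (- k * (N + y)) d d"
    using N k unfolding pareto_spec_def pareto_bd_def by simp
  then have "pareto_spec p N (- N) q d"
    using H k by simp
  then have "pareto_spec q (- N) N p d"
    using pareto_spec_flip by blast
  then have qd: "q = d"
    using pareto_spec_skew_dominant N(1) by (metis abs_minus_commute)
  have "0 \<le> b \<longleftrightarrow> 0 \<le> x + k * b" for b
  proof -
    have "0 \<le> b \<longleftrightarrow> pareto_spec a b (- k * N) d d"
      using N k by (simp add: pareto_spec_at_d_iff)
    also have "\<dots> \<longleftrightarrow> pareto_spec a (x + k * b) (y - N) d d"
      using H[of b "- k * N" d] k pa qd by simp
    also have "\<dots> \<longleftrightarrow> 0 \<le> x + k * b"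
      using N by (simp add: pareto_spec_at_d_iff)
    finally show ?thesis .
  qed
  then have "x = 0"
    using eq_zero_if_sign_preserving k by blast
  have "0 \<le> c \<longleftrightarrow> 0 \<le> y + (1 / k) * c" for c
  proof -
    have "0 \<le> c \<longleftrightarrow> pareto_spec a (- N / k) c d a"
      using N k by (simp add: pareto_spec_at_a_iff)
    also have "\<dots> \<longleftrightarrow> pareto_spec a (x - N) (y + c / k) d a"
      using H[of "- N / k" c a] k pa qd by simp
    also have "\<dots> \<longleftrightarrow> 0 \<le> y + (1 / k) * c"
      using N by (simp add: pareto_spec_at_a_iff)
    finally show ?thesis .
  qed
  then have "y = 0"
    using eq_zero_if_sign_preserving k by (metis zero_less_divide_1_iff)
  with pa qd \<open>x = 0\<close> show ?thesis by blast
qed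

lemma pareto_spec_preserver_normal_form:
  assumes k: "k > 0"
    and H: "\<And>a b c d l. pareto_spec a b c d l \<longleftrightarrow>
      pareto_spec (a * x1 + d * y1) (a * x2 + k * b + d * y2) (a * x3 + c / k + d * y3) (a * x4 + d * y4) l"
  shows "(x1, x2, x3, x4) = (1, 0, 0, 0) \<and> (y1, y2, y3, y4) = (0, 0, 0, 1)"
proof -
  have "a * x1 + d * y1 = a \<and> a * x4 + d * y4 = d \<and> a * x2 + d * y2 = 0 \<and> a * x3 + d * y3 = 0" for a d
  proof (rule pareto_spec_affine_invariance[OF k])
    show "pareto_spec a b c d l \<longleftrightarrow>
      pareto_spec (a * x1 + d * y1) ((a * x2 + d * y2) + k * b) ((a * x3 + d * y3) + c / k) (a * x4 + d * y4) l"
      for b c l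
      using H[of a b c d l] by (simp add: ac_simps)
  qed
  from this[of 1 0] this[of 0 1] show ?thesis by simp
qed

lemma pareto_spec_preserver_off_diagonal:
  assumes H: "\<And>b c l. pareto_spec 0 b c 0 l \<longleftrightarrow>
      pareto_spec (b * u1 + c * v1) (b * u2 + c * v2) (b * u3 + c * v3) (b * u4 + c * v4) l"
  shows "u1 = 0 \<and> u4 = 0 \<and> v1 = 0 \<and> v4 = 0 \<and>
    (\<exists>k>0. (u2 = k \<and> u3 = 0 \<and> v2 = 0 \<and> v3 = 1 / k) \<or> (u2 = 0 \<and> u3 = k \<and> v2 = 1 / k \<and> v3 = 0))"
proof -
  have u: "u1 = 0 \<and> u4 = 0"
  proof (rule diag_zero_if_pareto_spectra_zero)
    show "l = 0" if "pareto_spec u1 u2 u3 u4 l" for l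
      using H[of 1 0 l] that pareto_spec_zero_diag_triangular[of 1 0 l] by simp
    show "l = 0" if "pareto_spec (- u1) (- u2) (- u3) (- u4) l" for l
      using H[of "- 1" 0 l] that pareto_spec_zero_diag_triangular[of "- 1" 0 l] by simp
  qed
  have v: "v1 = 0 \<and> v4 = 0"
  proof (rule diag_zero_if_pareto_spectra_zero)
    show "l = 0" if "pareto_spec v1 v2 v3 v4 l" for l
      using H[of 0 1 l] that pareto_spec_zero_diag_triangular[of 0 1 l] by simp
    show "l = 0" if "pareto_spec (- v1) (- v2) (- v3) (- v4) l" for l
      using H[of 0 "- 1" l] that pareto_spec_zero_diag_triangular[of 0 "- 1" l] by simp
  qed
  have prod: "u2 + l * l * v2 > 0 \<and> u3 + l * l * v3 > 0 \<and> (u2 + l * l * v2) * (u3 + l * l * v3) = l * l"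
    if "l > 0" for l
  proof -
    have "pareto_spec 0 (u2 + l * l * v2) (u3 + l * l * v3) 0 l"
      using H[of 1 "l * l" l] pareto_spec_zero_diag_square[OF that] u v by (simp add: ac_simps)
    then show ?thesis
      using pareto_spec_zero_diag_pos[OF that] by blast
  qed
  \<comment> \<open>a quadratic polynomial in s taking the value s at s = 1, 4, 9 is the identity\<close>
  define p where "p s = u2 * u3 + s * (u2 * v3 + u3 * v2) + s * s * (v2 * v3)" for s
  have "p (l * l) = l * l" if "l > 0" for l
    using prod[OF that] unfolding p_def by (simp add: algebra_simps)
  from this[of 1] this[of 2] this[of 3] have "p 1 = 1" "p 4 = 4" "p 9 = 9"
    by simp_all
  then have "u2 * u3 = 0" "v2 * v3 = 0"
    unfolding p_def by linarith+
  moreover from this \<open>p 1 = 1\<close> have "u2 * v3 + u3 * v2 = 1"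
    unfolding p_def by (simp only: mult_1 add_0 add_0_right)
  moreover have "u2 + v2 > 0" "u3 + v3 > 0"
    using prod[of 1] by simp_all
  ultimately consider "u3 = 0" "v2 = 0" "u2 * v3 = 1" "u2 > 0" | "u2 = 0" "v3 = 0" "u3 * v2 = 1" "u3 > 0"
    by fastforce
  then have "\<exists>k>0. (u2 = k \<and> u3 = 0 \<and> v2 = 0 \<and> v3 = 1 / k) \<or> (u2 = 0 \<and> u3 = k \<and> v2 = 1 / k \<and> v3 = 0)"
    by cases (auto simp: field_simps)
  with u v show ?thesis by blast
qed

lemma pareto_spec_preserver:
  assumes H: "\<And>a b c d l. pareto_spec a b c d l \<longleftrightarrow>
      pareto_spec (a * x1 + b * u1 + c * v1 + d * y1) (a * x2 + b * u2 + c * v2 + d * y2)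
        (a * x3 + b * u3 + c * v3 + d * y3) (a * x4 + b * u4 + c * v4 + d * y4) l"
  shows "\<exists>k>0.
    (x1, x2, x3, x4) = (1, 0, 0, 0) \<and> (u1, u2, u3, u4) = (0, k, 0, 0) \<and>
    (v1, v2, v3, v4) = (0, 0, 1 / k, 0) \<and> (y1, y2, y3, y4) = (0, 0, 0, 1) \<or>
    (x1, x2, x3, x4) = (0, 0, 0, 1) \<and> (u1, u2, u3, u4) = (0, 0, k, 0) \<and>
    (v1, v2, v3, v4) = (0, 1 / k, 0, 0) \<and> (y1, y2, y3, y4) = (1, 0, 0, 0)"
proof -
  have "u1 = 0 \<and> u4 = 0 \<and> v1 = 0 \<and> v4 = 0 \<and>
    (\<exists>k>0. (u2 = k \<and> u3 = 0 \<and> v2 = 0 \<and> v3 = 1 / k) \<or> (u2 = 0 \<and> u3 = k \<and> v2 = 1 / k \<and> v3 = 0))"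
    by (rule pareto_spec_preserver_off_diagonal) (use H[of 0] in simp)
  then obtain k where k: "k > 0" and uv: "u1 = 0" "u4 = 0" "v1 = 0" "v4 = 0"
    and "(u2 = k \<and> u3 = 0 \<and> v2 = 0 \<and> v3 = 1 / k) \<or> (u2 = 0 \<and> u3 = k \<and> v2 = 1 / k \<and> v3 = 0)"
    by blast
  then consider "u2 = k" "u3 = 0" "v2 = 0" "v3 = 1 / k" | "u2 = 0" "u3 = k" "v2 = 1 / k" "v3 = 0"
    by blast
  then show ?thesis
  proof cases
    case 1
    have "(x1, x2, x3, x4) = (1, 0, 0, 0) \<and> (y1, y2, y3, y4) = (0, 0, 0, 1)"
      by (rule pareto_spec_preserver_normal_form[OF k]) (use H uv 1 in \<open>simp add: ac_simps\<close>)
    with k uv 1 show ?thesis by auto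
  next
    case 2
    have "(x4, x3, x2, x1) = (1, 0, 0, 0) \<and> (y4, y3, y2, y1) = (0, 0, 0, 1)"
      by (rule pareto_spec_preserver_normal_form[OF k]) (use H uv 2 pareto_spec_flip in \<open>simp add: ac_simps\<close>)
    with k uv 2 show ?thesis by auto
  qed
qed

lemma exchange_if_pareto_spectra:
  assumes spec: "\<And>l. pareto_spec a b b d l \<longleftrightarrow> l = 0 \<or> l = 1"
    and neg_spec: "\<And>l. pareto_spec (- a) (- b) (- b) (- d) l \<longleftrightarrow> l = - 1"
  shows "a = 0 \<and> b = 1 \<and> d = 0"
proof -
  consider "b > 0" | "b = 0" | "b < 0" by linarith
  then show ?thesis
  proof cases
    case 1
    then have "pareto_spec a b b d a" "pareto_spec a b b d d"
      unfolding pareto_spec_def pareto_bd_def by auto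
    then have a: "a = 0 \<or> a = 1" and d: "d = 0 \<or> d = 1"
      using spec by blast+
    have "pareto_int (- a) (- b) (- b) (- d) (- 1)"
      using neg_spec[of "- 1"] 1 unfolding pareto_spec_def pareto_bd_def by auto
    then obtain t where t: "t > 0" "b = t * (1 - a)" "1 - d = t * b"
      unfolding pareto_int_def by (auto simp: algebra_simps)
    with 1 a have "a = 0" "b = t" by auto
    with t d have "(t - 1) * (t + 1) = 0"
      by (auto simp: algebra_simps)
    with t(1) have "t = 1"
      by simp
    with t \<open>a = 0\<close> \<open>b = t\<close> show ?thesis by simp
  next
    case 2
    then have "pareto_spec (- a) (- b) (- b) (- d) (- a)" "pareto_spec (- a) (- b) (- b) (- d) (- d)"
      unfolding pareto_spec_def pareto_bd_def by auto
    then have "a = 1" "d = 1"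
      using neg_spec by auto
    with 2 spec[of 0] show ?thesis
      by (simp add: pareto_spec_diagonal)
  next
    case 3
    have "pareto_int a b b d 0" "pareto_int a b b d 1"
      using spec[of 0] spec[of 1] 3 unfolding pareto_spec_def pareto_bd_def by auto
    with 3 show ?thesis
      using pareto_int_sym_neg_unique by fastforce
  qed
qed

lemma sym_pareto_preserver_unit_diagonal:
  assumes e: "(e1 = 1 \<and> e4 = 0) \<or> (e1 = 0 \<and> e4 = 1)"
    and H: "\<And>b l. pareto_spec e1 b b e4 l \<longleftrightarrow> pareto_spec z1 (z2 + b) (z2 + b) z4 l"
  shows "z2 = 0 \<and> ((z1 = 0 \<and> z4 = 1) \<or> (z1 = 1 \<and> z4 = 0))"
proof -
  have spec: "pareto_spec z1 z2 z2 z4 l \<longleftrightarrow> l = 0 \<or> l = 1" for l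
    using H[of 0 l] e by (auto simp: pareto_spec_diagonal)
  have "z2 = 0"
  proof (rule ccontr)
    assume "z2 \<noteq> 0"
    then consider "z2 < 0" | "z2 > 0" by linarith
    then show False
    proof cases
      case 1
      have "pareto_int z1 z2 z2 z4 0" "pareto_int z1 z2 z2 z4 1"
        using spec[of 0] spec[of 1] 1 unfolding pareto_spec_def pareto_bd_def by auto
      with 1 show False
        using pareto_int_sym_neg_unique by fastforce
    next
      case 2
      \<comment> \<open>b = - z2 makes the right-hand side diagonal, with spectrum {z1, z4}\<close>
      have "pareto_spec e1 (- z2) (- z2) e4 z1" "pareto_spec e1 (- z2) (- z2) e4 z4"
        using H[of "- z2" z1] H[of "- z2" z4] by (simp_all add: pareto_spec_diagonal)
      with 2 have "pareto_int e1 (- z2) (- z2) e4 z1" "pareto_int e1 (- z2) (- z2) e4 z4"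
        unfolding pareto_spec_def pareto_bd_def by auto
      with 2 have "z4 = z1"
        using pareto_int_sym_neg_unique[of "- z2"] by force
      with spec 2 have "l = z1 \<or> l = z1 + z2 \<longleftrightarrow> l = 0 \<or> l = 1" for l
        using pareto_spec_sym_equal_diag[of z1 z2 l] by auto
      from this[of 0] this[of 1] 2 have "z1 = 0" "z2 = 1"
        by auto
      with H[of "- 1" 0] \<open>z4 = z1\<close> have "pareto_spec e1 (- 1) (- 1) e4 0"
        by (simp add: pareto_spec_diagonal)
      with e show False
        unfolding pareto_spec_def pareto_bd_def pareto_int_def by auto
    qed
  qed
  with spec have "l = z1 \<or> l = z4 \<longleftrightarrow> l = 0 \<or> l = 1" for l
    by (simp add: pareto_spec_diagonal)
  from this[of 0] this[of 1] this[of z1] this[of z4] \<open>z2 = 0\<close> show ?thesis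
    by auto
qed

lemma sym_pareto_spec_preserver:
  assumes H: "\<And>a b d l. pareto_spec a b b d l \<longleftrightarrow>
      pareto_spec (a * x1 + b * g1 + d * y1) (a * x2 + b * g2 + d * y2) (a * x2 + b * g2 + d * y2)
        (a * x4 + b * g4 + d * y4) l"
  shows "(g1, g2, g4) = (0, 1, 0) \<and>
    ((x1, x2, x4) = (1, 0, 0) \<and> (y1, y2, y4) = (0, 0, 1) \<or>
     (x1, x2, x4) = (0, 0, 1) \<and> (y1, y2, y4) = (1, 0, 0))"
proof -
  have g: "g1 = 0 \<and> g2 = 1 \<and> g4 = 0"
  proof (rule exchange_if_pareto_spectra)
    show "pareto_spec g1 g2 g2 g4 l \<longleftrightarrow> l = 0 \<or> l = 1" for l
      using H[of 0 1 0 l] pareto_spec_sym_equal_diag[of 0 1 l] by simp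
    show "pareto_spec (- g1) (- g2) (- g2) (- g4) l \<longleftrightarrow> l = - 1" for l
      using H[of 0 "- 1" 0 l] pareto_spec_sym_equal_diag[of 0 "- 1" l] by simp
  qed
  have x: "x2 = 0 \<and> ((x1 = 0 \<and> x4 = 1) \<or> (x1 = 1 \<and> x4 = 0))"
  proof (rule sym_pareto_preserver_unit_diagonal[of 1 0])
    show "pareto_spec 1 b b 0 l \<longleftrightarrow> pareto_spec x1 (x2 + b) (x2 + b) x4 l" for b l
      using H[of 1 b 0 l] g by (simp add: ac_simps)
  qed simp
  have y: "y2 = 0 \<and> ((y1 = 0 \<and> y4 = 1) \<or> (y1 = 1 \<and> y4 = 0))"
  proof (rule sym_pareto_preserver_unit_diagonal[of 0 1])
    show "pareto_spec 0 b b 1 l \<longleftrightarrow> pareto_spec y1 (y2 + b) (y2 + b) y4 l" for b l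
      using H[of 0 b 1 l] g by (simp add: ac_simps)
  qed simp
  \<comment> \<open>the identity has spectrum {1}, which rules out x and y being the same diagonal unit\<close>
  have "x1 + y1 = 1 \<or> x4 + y4 = 1"
    using H[of 1 0 1 1] x y by (simp add: pareto_spec_diagonal)
  with g x y show ?thesis
    by auto
qed

lemma L_spectra_cone_rescale:
  assumes "k > 0"
  shows "L_spectrum_int (cone_mat (cone_a A) (k * cone_b A) (cone_c A / k) (cone_d A)) = L_spectrum_int A \<and>
    L_spectrum_bd (cone_mat (cone_a A) (k * cone_b A) (cone_c A / k) (cone_d A)) = L_spectrum_bd A"
  unfolding set_eq_iff L_spectrum_int_iff L_spectrum_bd_iff
  using pareto_int_rescale[OF assms] pareto_bd_rescale[OF assms] by simp

lemma L_spectra_cone_flip_rescale: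
  assumes "k > 0"
  shows "L_spectrum_int (cone_mat (cone_d A) (cone_c A / k) (k * cone_b A) (cone_a A)) = L_spectrum_int A \<and>
    L_spectrum_bd (cone_mat (cone_d A) (cone_c A / k) (k * cone_b A) (cone_a A)) = L_spectrum_bd A"
  unfolding set_eq_iff L_spectrum_int_iff L_spectrum_bd_iff cone_coords_cone_mat
  using pareto_int_flip pareto_bd_flip pareto_int_rescale[OF assms] pareto_bd_rescale[OF assms] by metis

lemma L_spectrum_preserver_cone_form:
  fixes \<phi> :: "mat2 \<Rightarrow> mat2"
  assumes lin: "linear \<phi>" and spec: "\<And>A. L_spectrum (\<phi> A) = L_spectrum A"
  shows "\<exists>k>0. (\<forall>A. \<phi> A = cone_mat (cone_a A) (k * cone_b A) (cone_c A / k) (cone_d A)) \<or>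
               (\<forall>A. \<phi> A = cone_mat (cone_d A) (cone_c A / k) (k * cone_b A) (cone_a A))"
proof -
  define X U V Y where "X = \<phi> (cone_mat 1 0 0 0)" and "U = \<phi> (cone_mat 0 1 0 0)"
    and "V = \<phi> (cone_mat 0 0 1 0)" and "Y = \<phi> (cone_mat 0 0 0 1)"
  have "A = cone_a A *\<^sub>R cone_mat 1 0 0 0 + cone_b A *\<^sub>R cone_mat 0 1 0 0 +
            cone_c A *\<^sub>R cone_mat 0 0 1 0 + cone_d A *\<^sub>R cone_mat 0 0 0 1" for A
    by (simp add: mat2_eq_iff_cone_coords)
  then have decomp: "\<phi> A = cone_a A *\<^sub>R X + cone_b A *\<^sub>R U + cone_c A *\<^sub>R V + cone_d A *\<^sub>R Y" for A
    unfolding X_def U_def V_def Y_def using linear_add[OF lin] linear_scale[OF lin] by metis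
  have "pareto_spec a b c d l \<longleftrightarrow>
    pareto_spec (a * cone_a X + b * cone_a U + c * cone_a V + d * cone_a Y)
      (a * cone_b X + b * cone_b U + c * cone_b V + d * cone_b Y)
      (a * cone_c X + b * cone_c U + c * cone_c V + d * cone_c Y)
      (a * cone_d X + b * cone_d U + c * cone_d V + d * cone_d Y) l" for a b c d l
    using spec[of "cone_mat a b c d"] decomp[of "cone_mat a b c d"]
    by (simp add: set_eq_iff L_spectrum_iff)
  from pareto_spec_preserver[OF this] obtain k where "k > 0" and
    "(cone_a X, cone_b X, cone_c X, cone_d X) = (1, 0, 0, 0) \<and> (cone_a U, cone_b U, cone_c U, cone_d U) = (0, k, 0, 0) \<and>
     (cone_a V, cone_b V, cone_c V, cone_d V) = (0, 0, 1 / k, 0) \<and> (cone_a Y, cone_b Y, cone_c Y, cone_d Y) = (0, 0, 0, 1) \<or>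
     (cone_a X, cone_b X, cone_c X, cone_d X) = (0, 0, 0, 1) \<and> (cone_a U, cone_b U, cone_c U, cone_d U) = (0, 0, k, 0) \<and>
     (cone_a V, cone_b V, cone_c V, cone_d V) = (0, 1 / k, 0, 0) \<and> (cone_a Y, cone_b Y, cone_c Y, cone_d Y) = (1, 0, 0, 0)"
    by blast
  with \<open>k > 0\<close> show ?thesis
    unfolding mat2_eq_iff_cone_coords decomp by (auto intro!: exI[of _ k])
qed

lemma sym_L_spectrum_preserver_cone_form:
  fixes \<phi> :: "mat2 \<Rightarrow> mat2"
  assumes add: "\<forall>A\<in>sym_mats. \<forall>B\<in>sym_mats. \<phi> (A + B) = \<phi> A + \<phi> B"
    and scale: "\<forall>c. \<forall>A\<in>sym_mats. \<phi> (c *\<^sub>R A) = c *\<^sub>R \<phi> A"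
    and into: "\<phi> ` sym_mats \<subseteq> sym_mats"
    and spec: "\<forall>A\<in>sym_mats. L_spectrum (\<phi> A) = L_spectrum A"
  shows "(\<forall>A\<in>sym_mats. \<phi> A = A) \<or>
         (\<forall>A\<in>sym_mats. \<phi> A = cone_mat (cone_d A) (cone_c A) (cone_b A) (cone_a A))"
proof -
  define X G Y where "X = \<phi> (cone_mat 1 0 0 0)" and "G = \<phi> (cone_mat 0 1 1 0)"
    and "Y = \<phi> (cone_mat 0 0 0 1)"
  have sym_basis: "cone_mat 1 0 0 0 \<in> sym_mats" "cone_mat 0 1 1 0 \<in> sym_mats" "cone_mat 0 0 0 1 \<in> sym_mats"
    by (simp_all add: sym_mats_iff_cone_coords)
  have decomp: "\<phi> A = cone_a A *\<^sub>R X + cone_b A *\<^sub>R G + cone_d A *\<^sub>R Y" if "A \<in> sym_mats" for A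
  proof -
    have "A = cone_a A *\<^sub>R cone_mat 1 0 0 0 + cone_b A *\<^sub>R cone_mat 0 1 1 0 + cone_d A *\<^sub>R cone_mat 0 0 0 1"
      using that by (simp add: mat2_eq_iff_cone_coords sym_mats_iff_cone_coords)
    moreover have "r *\<^sub>R A \<in> sym_mats" "A + B \<in> sym_mats" if "A \<in> sym_mats" "B \<in> sym_mats" for r A B
      using that by (simp_all add: sym_mats_iff_cone_coords)
    ultimately show ?thesis
      unfolding X_def G_def Y_def using add scale sym_basis by metis
  qed
  have "X \<in> sym_mats" "G \<in> sym_mats" "Y \<in> sym_mats"
    using into sym_basis unfolding X_def G_def Y_def by blast+
  then have XGY: "cone_c X = cone_b X" "cone_c G = cone_b G" "cone_c Y = cone_b Y"
    by (simp_all add: sym_mats_iff_cone_coords)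
  have "pareto_spec a b b d l \<longleftrightarrow>
    pareto_spec (a * cone_a X + b * cone_a G + d * cone_a Y) (a * cone_b X + b * cone_b G + d * cone_b Y)
      (a * cone_b X + b * cone_b G + d * cone_b Y) (a * cone_d X + b * cone_d G + d * cone_d Y) l" for a b d l
  proof -
    have "cone_mat a b b d \<in> sym_mats"
      by (simp add: sym_mats_iff_cone_coords)
    with spec have "L_spectrum (\<phi> (cone_mat a b b d)) = L_spectrum (cone_mat a b b d)"
      by blast
    with decomp[OF \<open>cone_mat a b b d \<in> sym_mats\<close>] XGY show ?thesis
      by (simp add: set_eq_iff L_spectrum_iff)
  qed
  from sym_pareto_spec_preserver[OF this]
  have "(cone_a G, cone_b G, cone_d G) = (0, 1, 0)"
    "(cone_a X, cone_b X, cone_d X) = (1, 0, 0) \<and> (cone_a Y, cone_b Y, cone_d Y) = (0, 0, 1) \<or>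
     (cone_a X, cone_b X, cone_d X) = (0, 0, 1) \<and> (cone_a Y, cone_b Y, cone_d Y) = (1, 0, 0)"
    by blast+
  with XGY show ?thesis
    unfolding mat2_eq_iff_cone_coords using decomp by (auto simp: sym_mats_iff_cone_coords)
qed

theorem corollary1p2:
  fixes W :: "mat2 set" and \<phi> :: "mat2 \<Rightarrow> mat2"
  assumes "W = UNIV \<or> W = sym_mats"
    and "\<forall>A\<in>W. \<forall>B\<in>W. \<phi> (A + B) = \<phi> A + \<phi> B"
    and "\<forall>c. \<forall>A\<in>W. \<phi> (c *\<^sub>R A) = c *\<^sub>R \<phi> A"
    and "\<phi> ` W \<subseteq> W"
    and "\<forall>A\<in>W. L_spectrum (\<phi> A) = L_spectrum A"
  shows "\<forall>A\<in>W. L_spectrum_int A = L_spectrum_int (\<phi> A) \<and>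
                 L_spectrum_bd A = L_spectrum_bd (\<phi> A)"
proof -
  have "\<exists>k>0. (\<forall>A\<in>W. \<phi> A = cone_mat (cone_a A) (k * cone_b A) (cone_c A / k) (cone_d A)) \<or>
              (\<forall>A\<in>W. \<phi> A = cone_mat (cone_d A) (cone_c A / k) (k * cone_b A) (cone_a A))"
    using assms(1)
  proof
    assume "W = UNIV"
    with assms(2,3) have "linear \<phi>"
      by (simp add: linearI)
    with assms(5) \<open>W = UNIV\<close> show ?thesis
      using L_spectrum_preserver_cone_form[of \<phi>] by simp
  next
    assume "W = sym_mats"
    with assms(2-5) have "(\<forall>A\<in>W. \<phi> A = A) \<or>
        (\<forall>A\<in>W. \<phi> A = cone_mat (cone_d A) (cone_c A) (cone_b A) (cone_a A))"
      using sym_L_spectrum_preserver_cone_form[of \<phi>] by simp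
    then show ?thesis
      by (intro exI[of _ 1]) (simp add: cone_mat_cone_coords)
  qed
  then obtain k where "k > 0" and
    "(\<forall>A\<in>W. \<phi> A = cone_mat (cone_a A) (k * cone_b A) (cone_c A / k) (cone_d A)) \<or>
     (\<forall>A\<in>W. \<phi> A = cone_mat (cone_d A) (cone_c A / k) (k * cone_b A) (cone_a A))"
    by blast
  then show ?thesis
    using L_spectra_cone_rescale[OF \<open>k > 0\<close>] L_spectra_cone_flip_rescale[OF \<open>k > 0\<close>] by metis
qed

end
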